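(* Let $Z$ be a classical random variable on $\{0,1\}^m$ and $B$ a quantum system with joint state $\rho_{ZB}=\sum_z p_z|z\rangle\langle z|\otimes\rho^z_B$. If $\|\rho_{ZB}-\rho_{U_m}\otimes\rho_B\|_{\mathrm{tr}}>\epsilon$, then there exists $i\in[m]$ such that $$\Big\|\sum_{z:\,z_i=0}p_z\,|z_{[i-1]}\rangle\langle z_{[i-1]}|\otimes\rho^z_B-\sum_{z:\,z_i=1}p_z\,|z_{[i-1]}\rangle\langle z_{[i-1]}|\otimes\rho^z_B\Big\|_{\mathrm{tr}}>\frac{\epsilon}{m}.$$
   Context: $[N]=\{1,\dots,N\}$; $z_i$ is the $i$-th bit of $z$ and $z_{[i-1]}$ the string of its first $i-1$ bits (empty for $i=1$). $\|A\|_{\mathrm{tr}}=\mathrm{tr}\sqrt{A^\dagger A}$; $\rho_{U_m}=2^{-m}\mathbb{1}$ is the fully mixed state on $m$ qubits; $\rho^z_B$ are density operators and $(p_z)$ a probability distribution. *)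

theory Defs
  imports "Jordan_Normal_Form.Matrix"
begin

definition adj :: "complex mat \<Rightarrow> complex mat" where
  "adj A = mat (dim_col A) (dim_row A) (\<lambda>(i,j). cnj (A $$ (j,i)))"

definition mtrace :: "complex mat \<Rightarrow> complex" where
  "mtrace A = (\<Sum>i<dim_row A. A $$ (i,i))"

definition psd :: "nat \<Rightarrow> complex mat \<Rightarrow> bool" where
  "psd n A \<longleftrightarrow> A \<in> carrier_mat n n \<and> adj A = A \<and>
     (\<forall>v \<in> carrier_vec n. (\<Sum>i<n. cnj (v $ i) * (A *\<^sub>v v) $ i) \<ge> 0)"

definition msqrt :: "complex mat \<Rightarrow> complex mat" where
  "msqrt A = (THE S. psd (dim_row A) S \<and> S * S = A)"

definition trace_norm :: "complex mat \<Rightarrow> real" where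
  "trace_norm A = Re (mtrace (msqrt (adj A * A)))"

definition density_op :: "nat \<Rightarrow> complex mat \<Rightarrow> bool" where
  "density_op d \<rho> \<longleftrightarrow> psd d \<rho> \<and> mtrace \<rho> = 1"

(* bit strings {0,1}^k, as boolean lists (True = 1) *)
definition bitstrings :: "nat \<Rightarrow> bool list set" where
  "bitstrings k = {z. length z = k}"

(* standard basis index of |z>, big-endian: z_1 is the most significant bit *)
fun bits_to_nat :: "bool list \<Rightarrow> nat" where
  "bits_to_nat [] = 0"
| "bits_to_nat (b # bs) = (if b then 2 ^ length bs else 0) + bits_to_nat bs"

definition nat_to_bits :: "nat \<Rightarrow> nat \<Rightarrow> bool list" where
  "nat_to_bits k n = (THE z. z \<in> bitstrings k \<and> bits_to_nat z = n)"

(* classical-quantum operator  \<Sum>_{x \<in> {0,1}^k} |x><x| \<otimes> F x  on C^(2^k) \<otimes> C^d,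
   where F x is a d x d matrix; Kronecker ordering: row index = x * d + b *)
definition cq_op :: "nat \<Rightarrow> nat \<Rightarrow> (bool list \<Rightarrow> complex mat) \<Rightarrow> complex mat" where
  "cq_op k d F = mat (2^k * d) (2^k * d)
     (\<lambda>(r,c). if r div d = c div d then F (nat_to_bits k (r div d)) $$ (r mod d, c mod d) else 0)"

definition wsum :: "nat \<Rightarrow> bool list set \<Rightarrow> (bool list \<Rightarrow> real) \<Rightarrow> (bool list \<Rightarrow> complex mat) \<Rightarrow> complex mat" where
  "wsum d S w M = mat d d (\<lambda>(a,b). \<Sum>z\<in>S. complex_of_real (w z) * M z $$ (a,b))"

end

theory Submission
  imports Defs "Jordan_Normal_Form.Spectral_Radius"
begin

text \<open>
  Hybrid argument for classical-quantum states.
  For \<open>i = 0..m\<close> the \<open>i\<close>-th hybrid keeps the first \<open>i\<close> bits of \<open>Z\<close> and makes the rest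
  uniform; hybrid \<open>m\<close> is \<open>\<rho>\<^sub>Z\<^sub>B\<close> and hybrid \<open>0\<close> is \<open>\<rho>\<^sub>U\<^sub>m \<otimes> \<rho>\<^sub>B\<close>.  Both are
  block diagonal, so their trace distance is \<open>\<Sum>\<^sub>z\<close> of the distances of the blocks.  By the
  triangle inequality each block distance is at most the sum of the \<open>m\<close> consecutive hybrid
  steps, and the \<open>i\<close>-th step at \<open>z\<close> is \<open>2\<^sup>-\<^sup>(\<^sup>m\<^sup>-\<^sup>i\<^sup>+\<^sup>1\<^sup>)\<close> times the trace norm of the
  bit-\<open>i\<close> gap at the prefix \<open>z\<^sub>[\<^sub>i\<^sub>-\<^sub>1\<^sub>]\<close>.  Summing over \<open>z\<close> regroups these into the \<open>m\<close>
  quantities of the theorem, so if the distance exceeds \<open>\<epsilon>\<close> one of them exceeds \<open>\<epsilon>/m\<close>.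
\<close>

lemma mat_mult_entry:
  assumes "A \<in> carrier_mat n k" "B \<in> carrier_mat k m" "i < n" "j < m"
  shows "(A * B) $$ (i,j) = (\<Sum>t<k. A $$ (i,t) * B $$ (t,j))"
  using assms by (auto simp: scalar_prod_def intro!: sum.cong)

lemma adj_dims[simp]: "dim_row (adj A) = dim_col A" "dim_col (adj A) = dim_row A"
  by (auto simp: adj_def)

lemma adj_index[simp]: "i < dim_col A \<Longrightarrow> j < dim_row A \<Longrightarrow> adj A $$ (i,j) = cnj (A $$ (j,i))"
  by (auto simp: adj_def)

lemma adj_carrier[simp]: "A \<in> carrier_mat n m \<Longrightarrow> adj A \<in> carrier_mat m n"
  unfolding carrier_mat_def by simp

lemma adj_adj[simp]: "adj (adj A) = A"
  by (rule eq_matI, auto)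

lemma adj_mult:
  assumes "A \<in> carrier_mat n k" "B \<in> carrier_mat k m"
  shows "adj (A * B) = adj B * adj A"
proof (rule eq_matI)
  fix i j assume "i < dim_row (adj B * adj A)" "j < dim_col (adj B * adj A)"
  hence i: "i < m" and j: "j < n" using assms by auto
  have "adj (A * B) $$ (i, j) = (\<Sum>t<k. cnj (A $$ (j,t)) * cnj (B $$ (t,i)))"
    using mat_mult_entry[OF assms j i] assms i j by simp
  also have "\<dots> = (adj B * adj A) $$ (i, j)"
    using mat_mult_entry[of "adj B" m k "adj A" n i j] assms i j by (simp add: mult.commute)
  finally show "adj (A * B) $$ (i, j) = (adj B * adj A) $$ (i, j)" .
qed (use assms in auto)

lemma adj_one[simp]: "adj (1\<^sub>m n) = 1\<^sub>m n"
  by (rule eq_matI, auto)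

lemma adj_add: "A \<in> carrier_mat n m \<Longrightarrow> B \<in> carrier_mat n m \<Longrightarrow> adj (A + B) = adj A + adj B"
  by (rule eq_matI, auto)

lemma adj_minus: "A \<in> carrier_mat n m \<Longrightarrow> B \<in> carrier_mat n m \<Longrightarrow> adj (A - B) = adj A - adj B"
  by (rule eq_matI, auto)

lemma sesquilinear_adj:
  assumes A: "A \<in> carrier_mat m n"
  shows "(\<Sum>i<m. cnj (v i) * (\<Sum>j<n. A $$ (i,j) * y j)) =
         (\<Sum>j<n. cnj (\<Sum>i<m. adj A $$ (j,i) * v i) * y j)"
proof -
  have "(\<Sum>i<m. cnj (v i) * (\<Sum>j<n. A $$ (i,j) * y j)) = (\<Sum>i<m. \<Sum>j<n. cnj (v i) * A $$ (i,j) * y j)"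
    by (simp add: sum_distrib_left mult.assoc)
  also have "\<dots> = (\<Sum>j<n. \<Sum>i<m. cnj (v i) * A $$ (i,j) * y j)" by (rule sum.swap)
  also have "\<dots> = (\<Sum>j<n. cnj (\<Sum>i<m. adj A $$ (j,i) * v i) * y j)"
  proof (rule sum.cong[OF refl])
    fix j assume j: "j \<in> {..<n}"
    have "cnj (\<Sum>i<m. adj A $$ (j,i) * v i) = (\<Sum>i<m. A $$ (i,j) * cnj (v i))"
      using A j by (auto intro!: sum.cong)
    thus "(\<Sum>i<m. cnj (v i) * A $$ (i,j) * y j) = cnj (\<Sum>i<m. adj A $$ (j,i) * v i) * y j"
      by (simp add: sum_distrib_right sum_distrib_left mult.commute mult.left_commute)
  qed
  finally show ?thesis .
qed

lemma cnj_mult_self: "cnj z * z = complex_of_real ((cmod z)^2)"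
  by (metis complex_norm_square mult.commute of_real_power)

text \<open>\<open>W\<^sup>\<dagger>W = 1\<close>; for square matrices this already gives \<open>WW\<^sup>\<dagger> = 1\<close>.\<close>

definition unitary :: "nat \<Rightarrow> complex mat \<Rightarrow> bool" where
  "unitary n W \<longleftrightarrow> W \<in> carrier_mat n n \<and> adj W * W = 1\<^sub>m n"

lemma unitary_right: "unitary n W \<Longrightarrow> W * adj W = 1\<^sub>m n"
  unfolding unitary_def using mat_mult_left_right_inverse[of "adj W" n W] by auto

lemma unitary_adj: "unitary n W \<Longrightarrow> unitary n (adj W)"
  unfolding unitary_def using unitary_right[unfolded unitary_def] by auto

lemma unitary_cancel:
  assumes "unitary n W" "X \<in> carrier_mat n m"
  shows "adj W * (W * X) = X"
proof -
  have W: "W \<in> carrier_mat n n" "adj W * W = 1\<^sub>m n" using assms by (auto simp: unitary_def)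
  have "adj W * (W * X) = (adj W * W) * X"
    using W assms(2) by (intro assoc_mult_mat[symmetric, of _ n n _ n _ m]) auto
  thus ?thesis using W assms(2) by simp
qed

lemma unitary_mult: "unitary n V \<Longrightarrow> unitary n W \<Longrightarrow> unitary n (V * W)"
proof -
  assume V: "unitary n V" and W: "unitary n W"
  hence c: "V \<in> carrier_mat n n" "W \<in> carrier_mat n n" by (auto simp: unitary_def)
  have "adj (V * W) * (V * W) = adj W * (adj V * (V * W))"
    using c by (simp add: adj_mult[of V n n W n] assoc_mult_mat[of _ n n _ n _ n])
  also have "\<dots> = 1\<^sub>m n" using unitary_cancel[OF V c(2)] W by (simp add: unitary_def)
  finally show ?thesis using c by (simp add: unitary_def)
qed

lemma unitary_col_norm:
  assumes U: "unitary n V" and j: "j < n"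
  shows "(\<Sum>k<n. (cmod (V $$ (k,j)))^2) = 1"
proof -
  have V: "V \<in> carrier_mat n n" "adj V * V = 1\<^sub>m n" using U by (auto simp: unitary_def)
  have "complex_of_real (\<Sum>k<n. (cmod (V $$ (k,j)))^2) = (\<Sum>k<n. cnj (V $$ (k,j)) * V $$ (k,j))"
    by (simp add: cnj_mult_self)
  also have "\<dots> = (adj V * V) $$ (j,j)"
    using V j by (subst mat_mult_entry[of _ n n _ n]) auto
  also have "\<dots> = 1" using V j by simp
  finally show ?thesis by (metis of_real_eq_1_iff)
qed

definition diagm :: "nat \<Rightarrow> (nat \<Rightarrow> real) \<Rightarrow> complex mat" where
  "diagm n l = mat n n (\<lambda>(i,j). if i = j then complex_of_real (l i) else 0)"

lemma diagm_carrier[simp]: "diagm n l \<in> carrier_mat n n"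
  "dim_row (diagm n l) = n" "dim_col (diagm n l) = n"
  by (simp_all add: diagm_def)

lemma diagm_index[simp]:
  "i < n \<Longrightarrow> j < n \<Longrightarrow> diagm n l $$ (i,j) = (if i = j then complex_of_real (l i) else 0)"
  by (simp add: diagm_def)

lemma adj_diagm[simp]: "adj (diagm n l) = diagm n l"
  by (rule eq_matI, auto)

declare index_mult_mat(1)[simp del]

lemma sq_mult_carrier[simp]:
  "A \<in> carrier_mat n n \<Longrightarrow> B \<in> carrier_mat n n \<Longrightarrow> A * B \<in> carrier_mat n n"
  by auto

lemma mult_diagm_entry:
  assumes "W \<in> carrier_mat m n" "i < m" "j < n"
  shows "(W * diagm n l) $$ (i,j) = W $$ (i,j) * complex_of_real (l j)"
proof -
  have "(W * diagm n l) $$ (i,j) = (\<Sum>t<n. W $$ (i,t) * diagm n l $$ (t,j))"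
    using assms by (intro mat_mult_entry) auto
  also have "\<dots> = (\<Sum>t\<in>{j}. W $$ (i,t) * diagm n l $$ (t,j))"
    using assms by (intro sum.mono_neutral_right) auto
  finally show ?thesis using assms by simp
qed

lemma diagm_mult: "diagm n a * diagm n b = diagm n (\<lambda>k. a k * b k)"
  by (rule eq_matI) (auto simp: mult_diagm_entry[of _ n n])

lemma conj_diag_entry:
  assumes "V \<in> carrier_mat n n" "i < n" "j < n"
  shows "(V * diagm n l * adj V) $$ (i,j) = (\<Sum>k<n. V $$ (i,k) * complex_of_real (l k) * cnj (V $$ (j,k)))"
  using assms by (subst mat_mult_entry[of _ n n]) (auto simp: mult_diagm_entry intro!: sum.cong)

lemma adj_conj_diag:
  assumes "W \<in> carrier_mat n n"
  shows "adj (W * diagm n l * adj W) = W * diagm n l * adj W"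
  using assms by (simp add: adj_mult[of _ n n _ n] assoc_mult_mat[of _ n n _ n _ n])

lemma conj_diag_mult:
  assumes "unitary n W"
  shows "(W * diagm n a * adj W) * (W * diagm n b * adj W) = W * diagm n (\<lambda>k. a k * b k) * adj W"
proof -
  have W: "W \<in> carrier_mat n n" using assms by (auto simp: unitary_def)
  have "(W * diagm n a * adj W) * (W * diagm n b * adj W) = W * (diagm n a * (adj W * (W * (diagm n b * adj W))))"
    using W by (simp add: assoc_mult_mat[of _ n n _ n _ n])
  also have "adj W * (W * (diagm n b * adj W)) = diagm n b * adj W"
    using unitary_cancel[OF assms, of "diagm n b * adj W" n] W by simp
  also have "W * (diagm n a * (diagm n b * adj W)) = W * (diagm n a * diagm n b) * adj W"
    using W by (simp add: assoc_mult_mat[of _ n n _ n _ n])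
  finally show ?thesis by (simp add: diagm_mult)
qed

lemma unitary_unconj_diag:
  assumes U: "unitary n W"
  shows "adj W * (W * diagm n l * adj W) * W = diagm n l"
proof -
  have W: "W \<in> carrier_mat n n" using U by (simp add: unitary_def)
  have "adj W * (W * diagm n l * adj W) * W = (adj W * W) * diagm n l * (adj W * W)"
    using W by (simp add: assoc_mult_mat[of _ n n _ n _ n])
  also have "\<dots> = diagm n l" using U by (simp add: unitary_def)
  finally show ?thesis .
qed

lemma mtrace_comm:
  assumes "A \<in> carrier_mat n m" "B \<in> carrier_mat m n"
  shows "mtrace (A * B) = mtrace (B * A)"
proof -
  have "mtrace (A * B) = (\<Sum>i<n. \<Sum>t<m. A $$ (i,t) * B $$ (t,i))"
    using assms by (auto simp: mtrace_def mat_mult_entry intro!: sum.cong)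
  also have "\<dots> = (\<Sum>t<m. \<Sum>i<n. B $$ (t,i) * A $$ (i,t))"
    by (subst sum.swap) (simp add: mult.commute)
  also have "\<dots> = mtrace (B * A)"
    using assms by (auto simp: mtrace_def mat_mult_entry intro!: sum.cong)
  finally show ?thesis .
qed

lemma mtrace_conj_diag:
  assumes "unitary n W"
  shows "mtrace (W * diagm n l * adj W) = (\<Sum>k<n. complex_of_real (l k))"
proof -
  have W: "W \<in> carrier_mat n n" using assms by (auto simp: unitary_def)
  have "mtrace (W * diagm n l * adj W) = mtrace (adj W * (W * diagm n l))"
    using W by (intro mtrace_comm) auto
  also have "\<dots> = mtrace (diagm n l)" using unitary_cancel[OF assms, of "diagm n l" n] by simp
  finally show ?thesis by (simp add: mtrace_def)
qed

subsection \<open>The trace norm of a unitarily diagonalised matrix\<close>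

text \<open>The quadratic form of \<open>W diag(l) W\<^sup>\<dagger>\<close> is \<open>\<Sum>\<^sub>k l\<^sub>k |u\<^sub>k|\<^sup>2\<close> with \<open>u = W\<^sup>\<dagger> v\<close>,
  so nonnegative eigenvalues give a positive semidefinite matrix.\<close>

lemma psd_conj_diag:
  assumes "unitary n W" "\<forall>k<n. l k \<ge> 0"
  shows "psd n (W * diagm n l * adj W)"
proof -
  have W: "W \<in> carrier_mat n n" using assms by (auto simp: unitary_def)
  let ?X = "W * diagm n l * adj W"
  have X: "?X \<in> carrier_mat n n" using W by auto
  have "(\<Sum>i<n. cnj (v $ i) * (?X *\<^sub>v v) $ i) \<ge> 0" if v: "v \<in> carrier_vec n" for v
  proof -
    define u where "u k = (\<Sum>j<n. cnj (W $$ (j,k)) * v $ j)" for k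
    have "(\<Sum>i<n. cnj (v $ i) * (?X *\<^sub>v v) $ i)
        = (\<Sum>i<n. \<Sum>j<n. \<Sum>k<n. cnj (v $ i) * W $$ (i,k) * complex_of_real (l k) * cnj (W $$ (j,k)) * v $ j)"
      using X v W
      by (auto simp: scalar_prod_def conj_diag_entry sum_distrib_left sum_distrib_right mult.assoc
               intro!: sum.cong)
    also have "\<dots> = (\<Sum>k<n. \<Sum>i<n. \<Sum>j<n. cnj (v $ i) * W $$ (i,k) * complex_of_real (l k) * cnj (W $$ (j,k)) * v $ j)"
      by (subst sum.swap) (intro sum.cong refl sum.swap)
    also have "\<dots> = (\<Sum>k<n. complex_of_real (l k) * (cnj (u k) * u k))"
    proof (intro sum.cong refl)
      fix k
      have "cnj (u k) * u k = (\<Sum>i<n. cnj (v $ i) * W $$ (i,k)) * (\<Sum>j<n. cnj (W $$ (j,k)) * v $ j)"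
        by (simp add: u_def mult.commute)
      also have "\<dots> = (\<Sum>i<n. \<Sum>j<n. cnj (v $ i) * W $$ (i,k) * (cnj (W $$ (j,k)) * v $ j))"
        by (rule sum_product)
      finally show "(\<Sum>i<n. \<Sum>j<n. cnj (v $ i) * W $$ (i,k) * complex_of_real (l k) * cnj (W $$ (j,k)) * v $ j)
          = complex_of_real (l k) * (cnj (u k) * u k)"
        by (simp add: sum_distrib_left mult_ac)
    qed
    also have "\<dots> = (\<Sum>k<n. complex_of_real (l k * (cmod (u k))^2))"
      by (simp add: cnj_mult_self)
    also have "\<dots> \<ge> 0"
      using assms(2) by (intro sum_nonneg) (auto simp: less_eq_complex_def)
    finally show ?thesis .
  qed
  thus ?thesis unfolding psd_def using X adj_conj_diag[OF W] by auto
qed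

text \<open>Key step of the uniqueness of positive square roots: a vector \<open>x = S w - c w\<close> with
  \<open>S x = -c x\<close>, \<open>c \<ge> 0\<close>, vanishes when \<open>S\<close> is positive semidefinite.  For \<open>c > 0\<close> this is
  positivity of \<open>\<langle>x, S x\<rangle> = -c\<parallel>x\<parallel>\<^sup>2\<close>; for \<open>c = 0\<close> it is \<open>\<parallel>x\<parallel>\<^sup>2 = \<langle>x, S w\<rangle> = \<langle>S x, w\<rangle> = 0\<close>.\<close>

lemma psd_negative_eigenvector_zero:
  assumes S: "psd n S" and c: "c \<ge> 0"
    and Sx: "\<And>i. i < n \<Longrightarrow> (\<Sum>j<n. S $$ (i,j) * x j) = - complex_of_real c * x i"
    and x: "\<And>i. i < n \<Longrightarrow> x i = (\<Sum>j<n. S $$ (i,j) * w j) - complex_of_real c * w i"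
    and i: "i < n"
  shows "x i = 0"
proof -
  have Sc: "S \<in> carrier_mat n n" and Sh: "adj S = S" using S by (auto simp: psd_def)
  define v where "v = vec n x"
  have v: "v \<in> carrier_vec n" by (simp add: v_def)
  define N where "N = (\<Sum>j<n. (cmod (x j))^2)"
  have N0: "N \<ge> 0" by (simp add: N_def sum_nonneg)
  have cN: "(\<Sum>j<n. cnj (x j) * x j) = complex_of_real N"
    by (simp add: N_def cnj_mult_self)
  have Sv: "(S *\<^sub>v v) $ j = - complex_of_real c * x j" if "j < n" for j
    using Sc that Sx[OF that] by (simp add: v_def scalar_prod_def atLeast0LessThan)
  have "(\<Sum>j<n. cnj (v $ j) * (S *\<^sub>v v) $ j) = (\<Sum>j<n. - complex_of_real c * (cnj (x j) * x j))"
    by (intro sum.cong refl) (simp add: Sv[unfolded v_def] v_def)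
  also have "\<dots> = complex_of_real (- c * N)"
    by (simp add: sum_distrib_left sum_negf flip: cN)
  finally have "complex_of_real (- c * N) \<ge> 0"
    using S v unfolding psd_def by metis
  hence "- c * N \<ge> 0" by (simp only: less_eq_complex_def) simp
  hence "N = 0"
  proof (cases "c = 0")
    case True
    have "complex_of_real N = (\<Sum>j<n. cnj (\<Sum>i<n. adj S $$ (j,i) * x i) * w j)"
      unfolding cN[symmetric] sesquilinear_adj[OF Sc, symmetric]
      using True by (intro sum.cong refl) (simp add: x)
    also have "\<dots> = 0" using True Sh by (simp add: Sx)
    finally show ?thesis by simp
  qed (use c N0 in \<open>simp add: mult_le_0_iff\<close>)
  hence "(cmod (x i))^2 = 0"
    using N_def i by (simp add: sum_nonneg_eq_0_iff)
  thus ?thesis by simp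
qed

text \<open>The columns of \<open>X = S W - W diag(l)\<close> satisfy the hypotheses above.\<close>

lemma psd_sqrt_unique:
  assumes U: "unitary n W" and l: "\<forall>k<n. l k \<ge> 0"
    and S: "psd n S" and SS: "S * S = W * diagm n (\<lambda>k. l k * l k) * adj W"
  shows "S = W * diagm n l * adj W"
proof -
  have W: "W \<in> carrier_mat n n" "adj W * W = 1\<^sub>m n" "W * adj W = 1\<^sub>m n"
    using U unitary_right[OF U] by (auto simp: unitary_def)
  have Sc: "S \<in> carrier_mat n n" using S by (auto simp: psd_def)
  define X where "X = S * W - W * diagm n l"
  have SSW: "S * (S * W) = W * diagm n (\<lambda>k. l k * l k)"
  proof -
    have "S * (S * W) = (S * S) * W" using Sc W by (simp add: assoc_mult_mat[of _ n n _ n _ n])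
    also have "\<dots> = W * (diagm n (\<lambda>k. l k * l k) * (adj W * W))"
      unfolding SS using W by (simp add: assoc_mult_mat[of _ n n _ n _ n])
    finally show ?thesis using W by simp
  qed
  have SWe: "(S * W) $$ (i,k) = (\<Sum>j<n. S $$ (i,j) * W $$ (j,k))" if "i < n" "k < n" for i k
    using that Sc W by (intro mat_mult_entry) auto
  have Xe: "X $$ (i,k) = (S * W) $$ (i,k) - W $$ (i,k) * complex_of_real (l k)" if "i < n" "k < n" for i k
    using that Sc W by (simp add: X_def mult_diagm_entry)
  have SXe: "(\<Sum>j<n. S $$ (i,j) * X $$ (j,k)) = - complex_of_real (l k) * X $$ (i,k)"
    if i: "i < n" and k: "k < n" for i k
  proof -
    have "(\<Sum>j<n. S $$ (i,j) * X $$ (j,k))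
        = (\<Sum>j<n. S $$ (i,j) * (S * W) $$ (j,k)) - (\<Sum>j<n. S $$ (i,j) * W $$ (j,k)) * complex_of_real (l k)"
      using k by (simp add: Xe right_diff_distrib sum_subtractf sum_distrib_right mult.assoc)
    also have "(\<Sum>j<n. S $$ (i,j) * (S * W) $$ (j,k)) = W $$ (i,k) * complex_of_real (l k * l k)"
      using i k Sc W SSW mat_mult_entry[of S n n "S * W" n i k] by (simp add: mult_diagm_entry)
    finally show ?thesis using i k by (simp add: Xe SWe algebra_simps)
  qed
  have X0: "X $$ (i,k) = 0" if "i < n" "k < n" for i k
    using psd_negative_eigenvector_zero[OF S, of "l k" "\<lambda>j. X $$ (j,k)" "\<lambda>j. W $$ (j,k)"]
      that l SXe Xe SWe by (simp add: mult.commute)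
  have SW: "S * W = W * diagm n l"
  proof (rule eq_matI)
    fix i k assume "i < dim_row (W * diagm n l)" "k < dim_col (W * diagm n l)"
    hence ik: "i < n" "k < n" using W by auto
    have "X $$ (i,k) = (S * W) $$ (i,k) - (W * diagm n l) $$ (i,k)"
      using ik Sc W by (simp add: X_def)
    thus "(S * W) $$ (i,k) = (W * diagm n l) $$ (i,k)" using X0[OF ik] by simp
  qed (use Sc W in auto)
  have "S = S * (W * adj W)" using W Sc by simp
  also have "\<dots> = (S * W) * adj W" using W Sc by (simp add: assoc_mult_mat[of _ n n _ n _ n])
  finally show ?thesis unfolding SW .
qed

lemma trace_norm_conj_diag:
  assumes U: "unitary n W" and A: "A = W * diagm n l * adj W"
  shows "trace_norm A = (\<Sum>k<n. \<bar>l k\<bar>)"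
proof -
  have W: "W \<in> carrier_mat n n" using U by (auto simp: unitary_def)
  have AA: "adj A * A = W * diagm n (\<lambda>k. \<bar>l k\<bar> * \<bar>l k\<bar>) * adj W"
    unfolding A adj_conj_diag[OF W] conj_diag_mult[OF U] by simp
  let ?S = "W * diagm n (\<lambda>k. \<bar>l k\<bar>) * adj W"
  have "msqrt (adj A * A) = ?S"
    unfolding msqrt_def
  proof (rule the_equality)
    show "psd (dim_row (adj A * A)) ?S \<and> ?S * ?S = adj A * A"
      using psd_conj_diag[OF U] conj_diag_mult[OF U] AA W by auto
  next
    fix S assume "psd (dim_row (adj A * A)) S \<and> S * S = adj A * A"
    thus "S = ?S" using psd_sqrt_unique[OF U, of "\<lambda>k. \<bar>l k\<bar>" S] AA W by auto
  qed
  thus ?thesis unfolding trace_norm_def by (simp add: mtrace_conj_diag[OF U])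
qed

subsection \<open>The spectral theorem for Hermitian matrices\<close>

definition herm :: "nat \<Rightarrow> complex mat \<Rightarrow> bool" where
  "herm n A \<longleftrightarrow> A \<in> carrier_mat n n \<and> adj A = A"

lemma herm_index: "herm n A \<Longrightarrow> i < n \<Longrightarrow> j < n \<Longrightarrow> cnj (A $$ (j,i)) = A $$ (i,j)"
  unfolding herm_def by (metis adj_index carrier_matD)

lemma unitary_normalised_columns:
  assumes orth: "corthogonal ws" and wsc: "set ws \<subseteq> carrier_vec n" and len: "length ws = n"
  defines "c \<equiv> \<lambda>j. complex_of_real (1 / sqrt (\<Sum>t<n. (cmod (ws ! j $ t))^2))"
  shows "unitary n (mat n n (\<lambda>(i,j). c j * ws ! j $ i))" and "\<And>j. j < n \<Longrightarrow> c j \<noteq> 0"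
proof -
  define nr where "nr j = (\<Sum>t<n. (cmod (ws ! j $ t))^2)" for j
  define W where "W = mat n n (\<lambda>(i,j). c j * ws ! j $ i)"
  have wsj: "j < n \<Longrightarrow> ws ! j \<in> carrier_vec n" for j using wsc len by auto
  have self: "j < n \<Longrightarrow> ws ! j \<bullet>c ws ! j = complex_of_real (nr j)" for j
    using wsj[of j] by (auto simp: nr_def scalar_prod_def atLeast0LessThan complex_norm_square[symmetric]
                             simp del: of_real_power intro!: sum.cong)
  have nrpos: "nr j > 0" if j: "j < n" for j
  proof -
    have "ws ! j \<bullet>c ws ! j \<noteq> 0" using orth j len by (auto simp: corthogonal_def)
    hence "nr j \<noteq> 0" using self[OF j] by auto
    moreover have "nr j \<ge> 0" by (simp add: nr_def sum_nonneg)
    ultimately show ?thesis by simp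
  qed
  have cc: "c j * c j * complex_of_real (nr j) = 1" if j: "j < n" for j
  proof -
    have "sqrt (nr j) * sqrt (nr j) = nr j" using nrpos[OF j] by simp
    hence "1 / sqrt (nr j) * (1 / sqrt (nr j)) * nr j = 1" using nrpos[OF j] by (simp add: field_simps)
    thus ?thesis unfolding c_def nr_def[symmetric] by (simp flip: of_real_mult)
  qed
  have Wc: "W \<in> carrier_mat n n" by (simp add: W_def)
  have "adj W * W = 1\<^sub>m n"
  proof (rule eq_matI)
    fix i j assume "i < dim_row (1\<^sub>m n)" "j < dim_col (1\<^sub>m n)"
    hence ij: "i < n" "j < n" by auto
    have "(adj W * W) $$ (i,j) = (\<Sum>t<n. c i * c j * (ws ! j $ t * cnj (ws ! i $ t)))"
      using Wc ij by (subst mat_mult_entry[of _ n n _ n]) (auto simp: W_def c_def intro!: sum.cong)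
    also have "\<dots> = c i * c j * (ws ! j \<bullet>c ws ! i)"
      using wsj[OF ij(1)] wsj[OF ij(2)] by (simp add: sum_distrib_left scalar_prod_def atLeast0LessThan)
    also have "\<dots> = 1\<^sub>m n $$ (i,j)"
      using cc[OF ij(1)] self[OF ij(1)] orth ij len by (auto simp: corthogonal_def)
    finally show "(adj W * W) $$ (i,j) = 1\<^sub>m n $$ (i,j)" .
  qed (use Wc in auto)
  thus "unitary n W" using Wc by (simp add: unitary_def)
  show "c j \<noteq> 0" if "j < n" for j using cc[OF that] by auto
qed

text \<open>Every nonzero vector is, up to a nonzero factor, the first column of a unitary
  (basis completion followed by Gram--Schmidt).\<close>

lemma unitary_with_first_column:
  assumes v: "v \<in> carrier_vec n" and v0: "v \<noteq> 0\<^sub>v n"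
  shows "\<exists>W c. unitary n W \<and> c \<noteq> 0 \<and> (\<forall>i<n. W $$ (i,0) = c * v $ i)"
proof -
  interpret cof_vec_space n "TYPE(complex)" .
  define b where "b = basis_completion v"
  from basis_completion[OF v v0, folded b_def]
  have dist_b: "distinct b" and indep: "\<not> lin_dep (set b)" and bc: "set b \<subseteq> carrier_vec n"
    and hdb: "hd b = v" and len_b: "length b = n" by auto
  have n0: "n \<noteq> 0" using v v0 by (auto intro!: eq_vecI)
  from hdb len_b n0 obtain vs where bv: "b = v # vs" by (cases b, auto)
  define ws where "ws = gram_schmidt n b"
  from gram_schmidt_result[OF bc dist_b indep ws_def]
  have orth: "corthogonal ws" and wsc: "set ws \<subseteq> carrier_vec n" and len: "length ws = n"
    by (auto simp: len_b)
  have "hd ws = v" unfolding ws_def bv using v by simp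
  hence ws0: "ws ! 0 = v" using n0 len by (cases ws, auto)
  define c where "c = (\<lambda>j. complex_of_real (1 / sqrt (\<Sum>t<n. (cmod (ws ! j $ t))^2)))"
  define W where "W = mat n n (\<lambda>(i,j). c j * ws ! j $ i)"
  have "unitary n W" "c 0 \<noteq> 0"
    using unitary_normalised_columns[OF orth wsc len] n0 unfolding W_def c_def by auto
  moreover have "\<forall>i<n. W $$ (i,0) = c 0 * v $ i" using n0 ws0 by (simp add: W_def)
  ultimately show ?thesis by blast
qed

lemma eigenvector_exists:
  fixes A :: "complex mat"
  assumes A: "A \<in> carrier_mat n n" and n: "n > 0"
  shows "\<exists>v e. v \<in> carrier_vec n \<and> v \<noteq> 0\<^sub>v n \<and> A *\<^sub>v v = e \<cdot>\<^sub>v v"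
proof -
  from spectrum_non_empty[OF A n] obtain e where "eigenvalue A e" by (auto simp: spectrum_def)
  then obtain v where "eigenvector A v e" by (auto simp: eigenvalue_def)
  thus ?thesis using A by (auto simp: eigenvector_def)
qed

lemma hermitian_deflation:
  assumes A: "herm n A" and n0: "0 < n"
  shows "\<exists>W e. unitary n W \<and> (\<forall>i<n. (adj W * A * W) $$ (i,0) = (if i = 0 then complex_of_real e else 0))"
proof -
  have Ac: "A \<in> carrier_mat n n" and Ah: "adj A = A" using A by (auto simp: herm_def)
  obtain v e where v: "v \<in> carrier_vec n" and v0: "v \<noteq> 0\<^sub>v n" and Av: "A *\<^sub>v v = e \<cdot>\<^sub>v v"
    using eigenvector_exists[OF Ac n0] by auto
  obtain W c where U: "unitary n W" and col0: "\<forall>i<n. W $$ (i,0) = c * v $ i"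
    using unitary_with_first_column[OF v v0] by blast
  have W: "W \<in> carrier_mat n n" "adj W * W = 1\<^sub>m n" using U by (auto simp: unitary_def)
  define A' where "A' = adj W * A * W"
  have AW: "(A * W) $$ (t,0) = e * W $$ (t,0)" if t: "t < n" for t
  proof -
    have "(A * W) $$ (t,0) = c * (\<Sum>s<n. A $$ (t,s) * v $ s)"
      using Ac W t n0 col0 by (subst mat_mult_entry[of _ n n _ n]) (auto simp: sum_distrib_left mult_ac)
    also have "(\<Sum>s<n. A $$ (t,s) * v $ s) = (A *\<^sub>v v) $ t"
      using Ac v t by (auto simp: scalar_prod_def intro!: sum.cong)
    also have "\<dots> = e * v $ t" using Av v t by simp
    finally show ?thesis using col0 t by simp
  qed
  have col: "A' $$ (i,0) = (if i = 0 then e else 0)" if i: "i < n" for i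
  proof -
    have "A' $$ (i,0) = (adj W * (A * W)) $$ (i,0)"
      unfolding A'_def using Ac W by (subst assoc_mult_mat[of _ n n _ n _ n]) auto
    also have "\<dots> = e * (\<Sum>t<n. adj W $$ (i,t) * W $$ (t,0))"
      using Ac W i n0 by (subst mat_mult_entry[of _ n n _ n]) (auto simp: AW sum_distrib_left mult_ac)
    also have "(\<Sum>t<n. adj W $$ (i,t) * W $$ (t,0)) = (adj W * W) $$ (i,0)"
      using W i n0 by (intro mat_mult_entry[symmetric]) auto
    finally show ?thesis using W i n0 by simp
  qed
  have A'h: "herm n A'"
    using Ac W Ah by (simp add: herm_def A'_def adj_mult[of _ n n _ n] assoc_mult_mat[of _ n n _ n _ n])
  have "cnj e = e" using herm_index[OF A'h n0 n0] col[OF n0] by simp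
  hence "e = complex_of_real (Re e)" by (simp add: complex_eq_iff)
  thus ?thesis using U col unfolding A'_def by metis
qed

definition unitary_ext :: "complex mat \<Rightarrow> complex mat" where
  "unitary_ext V = mat (Suc (dim_row V)) (Suc (dim_row V))
     (\<lambda>(i,j). if i = 0 \<and> j = 0 then 1 else if i = 0 \<or> j = 0 then 0 else V $$ (i - 1, j - 1))"

lemma unitary_ext_index:
  "V \<in> carrier_mat k k \<Longrightarrow> i < Suc k \<Longrightarrow> j < Suc k \<Longrightarrow> unitary_ext V $$ (i,j) =
     (if i = 0 \<and> j = 0 then 1 else if i = 0 \<or> j = 0 then 0 else V $$ (i - 1, j - 1))"
  by (simp add: unitary_ext_def)

lemma unitary_ext:
  assumes UV: "unitary k V"
  shows "unitary (Suc k) (unitary_ext V)"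
proof -
  have V: "V \<in> carrier_mat k k" "adj V * V = 1\<^sub>m k" using UV by (auto simp: unitary_def)
  have Wc: "unitary_ext V \<in> carrier_mat (Suc k) (Suc k)" using V by (simp add: unitary_ext_def)
  have "adj (unitary_ext V) * unitary_ext V = 1\<^sub>m (Suc k)"
  proof (rule eq_matI)
    fix i j assume "i < dim_row (1\<^sub>m (Suc k))" "j < dim_col (1\<^sub>m (Suc k))"
    hence ij: "i < Suc k" "j < Suc k" by auto
    have "(adj (unitary_ext V) * unitary_ext V) $$ (i,j)
        = (\<Sum>t<Suc k. cnj (unitary_ext V $$ (t,i)) * unitary_ext V $$ (t,j))"
      using Wc ij by (subst mat_mult_entry[of _ "Suc k" "Suc k" _ "Suc k"]) auto
    also have "\<dots> = cnj (unitary_ext V $$ (0,i)) * unitary_ext V $$ (0,j)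
          + (\<Sum>t<k. cnj (unitary_ext V $$ (Suc t,i)) * unitary_ext V $$ (Suc t,j))"
      by (rule sum.lessThan_Suc_shift)
    also have "\<dots> = 1\<^sub>m (Suc k) $$ (i,j)"
    proof (cases "i = 0 \<or> j = 0")
      case False
      then obtain i' j' where i': "i = Suc i'" and j': "j = Suc j'" by (cases i; cases j) auto
      have "(\<Sum>t<k. cnj (unitary_ext V $$ (Suc t,i)) * unitary_ext V $$ (Suc t,j)) = (adj V * V) $$ (i',j')"
        using V ij i' j' by (subst mat_mult_entry[of _ k k _ k]) (auto simp: unitary_ext_index)
      thus ?thesis using V ij i' j' by (simp add: unitary_ext_index)
    qed (use ij V in \<open>auto simp: unitary_ext_index\<close>)
    finally show "(adj (unitary_ext V) * unitary_ext V) $$ (i,j) = 1\<^sub>m (Suc k) $$ (i,j)" .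
  qed (use Wc in auto)
  thus ?thesis using Wc by (simp add: unitary_def)
qed

lemma conj_diag_unitary_ext:
  assumes A: "herm (Suc k) A" and UV: "unitary k V"
    and col: "\<forall>i<Suc k. A $$ (i,0) = (if i = 0 then complex_of_real e else 0)"
    and block: "mat k k (\<lambda>(i,j). A $$ (Suc i, Suc j)) = V * diagm k mu * adj V"
  shows "A = unitary_ext V * diagm (Suc k) (\<lambda>i. if i = 0 then e else mu (i - 1)) * adj (unitary_ext V)"
    (is "A = ?W * diagm (Suc k) ?l * adj ?W")
proof (rule eq_matI)
  have V: "V \<in> carrier_mat k k" using UV by (simp add: unitary_def)
  have Wc: "?W \<in> carrier_mat (Suc k) (Suc k)" using V by (simp add: unitary_ext_def)
  have Ac: "A \<in> carrier_mat (Suc k) (Suc k)" and Ah: "adj A = A" using A by (auto simp: herm_def)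
  fix i j assume "i < dim_row (?W * diagm (Suc k) ?l * adj ?W)" "j < dim_col (?W * diagm (Suc k) ?l * adj ?W)"
  hence ij: "i < Suc k" "j < Suc k" using Wc by auto
  have row: "A $$ (0,j) = cnj (A $$ (j,0))" using herm_index[OF A, of 0 j] ij by simp
  have "(?W * diagm (Suc k) ?l * adj ?W) $$ (i,j)
      = (\<Sum>t<Suc k. ?W $$ (i,t) * complex_of_real (?l t) * cnj (?W $$ (j,t)))"
    by (rule conj_diag_entry[OF Wc ij])
  also have "\<dots> = ?W $$ (i,0) * complex_of_real (?l 0) * cnj (?W $$ (j,0)) +
        (\<Sum>t<k. ?W $$ (i,Suc t) * complex_of_real (?l (Suc t)) * cnj (?W $$ (j,Suc t)))"
    by (rule sum.lessThan_Suc_shift)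
  also have "\<dots> = A $$ (i,j)"
  proof (cases "i = 0 \<or> j = 0")
    case True
    thus ?thesis using ij col row V by (auto simp: unitary_ext_index)
  next
    case False
    then obtain i' j' where i': "i = Suc i'" and j': "j = Suc j'" by (cases i; cases j) auto
    have "(\<Sum>t<k. ?W $$ (i,Suc t) * complex_of_real (?l (Suc t)) * cnj (?W $$ (j,Suc t)))
        = (V * diagm k mu * adj V) $$ (i',j')"
      using V ij i' j' by (subst conj_diag_entry) (auto simp: unitary_ext_index)
    thus ?thesis using ij i' j' V by (simp add: unitary_ext_index flip: block)
  qed
  finally show "A $$ (i,j) = (?W * diagm (Suc k) ?l * adj ?W) $$ (i,j)" by simp
qed (use A UV in \<open>auto simp: herm_def unitary_ext_def unitary_def\<close>)

text \<open>Spectral theorem, by induction on the size: deflate an eigenvector and diagonalise the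
  remaining lower-right block.\<close>

theorem spectral_theorem:
  assumes "herm n A"
  shows "\<exists>W l. unitary n W \<and> A = W * diagm n l * adj W"
  using assms
proof (induction n arbitrary: A)
  case 0
  have "A = 1\<^sub>m 0 * diagm 0 (\<lambda>_. 0) * adj (1\<^sub>m 0)"
    using 0 by (intro eq_matI) (auto simp: herm_def)
  moreover have "unitary 0 (1\<^sub>m 0)" by (simp add: unitary_def)
  ultimately show ?case by blast
next
  case (Suc k A)
  have Ac: "A \<in> carrier_mat (Suc k) (Suc k)" and Ah: "adj A = A" using Suc.prems by (auto simp: herm_def)
  obtain W0 e where U0: "unitary (Suc k) W0"
    and col: "\<forall>i<Suc k. (adj W0 * A * W0) $$ (i,0) = (if i = 0 then complex_of_real e else 0)"
    using hermitian_deflation[OF Suc.prems] by blast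
  have W0: "W0 \<in> carrier_mat (Suc k) (Suc k)" "W0 * adj W0 = 1\<^sub>m (Suc k)"
    using U0 unitary_right[OF U0] by (auto simp: unitary_def)
  define A' where "A' = adj W0 * A * W0"
  have A': "herm (Suc k) A'" using Ac Ah W0
    by (simp add: herm_def A'_def adj_mult[of _ "Suc k" "Suc k" _ "Suc k"] assoc_mult_mat[of _ "Suc k" "Suc k" _ "Suc k" _ "Suc k"])
  define A3 where "A3 = mat k k (\<lambda>(i,j). A' $$ (Suc i, Suc j))"
  have "herm k A3" using herm_index[OF A'] by (auto simp: herm_def A3_def intro!: eq_matI)
  then obtain V mu where UV: "unitary k V" and A3: "A3 = V * diagm k mu * adj V"
    using Suc.IH by blast
  define W where "W = unitary_ext V"
  define l where "l i = (if i = 0 then e else mu (i - 1))" for i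
  have A'd: "A' = W * diagm (Suc k) l * adj W"
    unfolding W_def l_def using conj_diag_unitary_ext[OF A' UV, of e mu] col A3 by (simp add: A'_def A3_def)
  have "W0 * A' * adj W0 = (W0 * adj W0) * A * (W0 * adj W0)"
    using Ac W0(1) by (simp add: A'_def assoc_mult_mat[of _ "Suc k" "Suc k" _ "Suc k" _ "Suc k"])
  hence "A = W0 * A' * adj W0" using Ac W0 by simp
  also have "\<dots> = (W0 * W) * diagm (Suc k) l * adj (W0 * W)"
    unfolding A'd using W0 unitary_ext[OF UV] unfolding W_def unitary_def
    by (simp add: adj_mult[of _ "Suc k" "Suc k" _ "Suc k"] assoc_mult_mat[of _ "Suc k" "Suc k" _ "Suc k" _ "Suc k"])
  finally show ?case using unitary_mult[OF U0 unitary_ext[OF UV]] unfolding W_def by blast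
qed

subsection \<open>The trace norm on Hermitian matrices\<close>

lemma herm_add: "herm n A \<Longrightarrow> herm n B \<Longrightarrow> herm n (A + B)"
  unfolding herm_def by (auto simp: adj_add)

lemma herm_minus: "herm n A \<Longrightarrow> herm n B \<Longrightarrow> herm n (A - B)"
  unfolding herm_def by (auto simp: adj_minus)

text \<open>A Hermitian \<open>A = Y diag(\<mu>) Y\<^sup>\<dagger>\<close> seen in another orthonormal basis \<open>W\<close> has diagonal entries
  \<open>\<Sum>\<^sub>j \<mu>\<^sub>j |V\<^sub>k\<^sub>j|\<^sup>2\<close> with \<open>V = W\<^sup>\<dagger>Y\<close> unitary, so any signed sum of them is at most
  \<open>\<Sum>\<^sub>j |\<mu>\<^sub>j|\<close> = the trace norm of \<open>A\<close>.\<close>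

lemma signed_diagonal_bound:
  assumes UW: "unitary n W" and UY: "unitary n Y" and s: "\<forall>k<n. \<bar>s k\<bar> \<le> 1"
  shows "(\<Sum>k<n. s k * Re ((adj W * (Y * diagm n mu * adj Y) * W) $$ (k,k))) \<le> (\<Sum>j<n. \<bar>mu j\<bar>)"
proof -
  define V where "V = adj W * Y"
  have UV: "unitary n V" unfolding V_def by (intro unitary_mult unitary_adj UW UY)
  have Vc: "V \<in> carrier_mat n n" using UV by (simp add: unitary_def)
  have conj: "adj W * (Y * diagm n mu * adj Y) * W = V * diagm n mu * adj V"
    using UW UY by (simp add: V_def unitary_def adj_mult[of _ n n _ n] assoc_mult_mat[of _ n n _ n _ n])
  have e: "Re ((adj W * (Y * diagm n mu * adj Y) * W) $$ (k,k)) = (\<Sum>j<n. mu j * (cmod (V $$ (k,j)))^2)"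
    if k: "k < n" for k
  proof -
    have "z * complex_of_real r * cnj z = complex_of_real (r * (cmod z)^2)" for z r
    proof -
      have "z * complex_of_real r * cnj z = complex_of_real r * (cnj z * z)" by (simp add: mult_ac)
      thus ?thesis by (simp only: cnj_mult_self of_real_mult)
    qed
    thus ?thesis unfolding conj conj_diag_entry[OF Vc k k] by (simp only: Re_sum Re_complex_of_real)
  qed
  have "(\<Sum>k<n. s k * Re ((adj W * (Y * diagm n mu * adj Y) * W) $$ (k,k)))
      = (\<Sum>k<n. \<Sum>j<n. s k * (mu j * (cmod (V $$ (k,j)))^2))"
    by (intro sum.cong refl) (simp add: e sum_distrib_left)
  also have "\<dots> \<le> (\<Sum>k<n. \<Sum>j<n. \<bar>mu j\<bar> * (cmod (V $$ (k,j)))^2)"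
  proof (intro sum_mono)
    fix k j assume k: "k \<in> {..<n}"
    have "s k * (mu j * (cmod (V $$ (k,j)))^2) \<le> \<bar>s k * mu j\<bar> * (cmod (V $$ (k,j)))^2"
      by (simp add: mult.assoc[symmetric] mult_right_mono)
    also have "\<dots> \<le> \<bar>mu j\<bar> * (cmod (V $$ (k,j)))^2"
      using s k by (intro mult_right_mono) (auto simp: abs_mult mult_left_le_one_le)
    finally show "s k * (mu j * (cmod (V $$ (k,j)))^2) \<le> \<bar>mu j\<bar> * (cmod (V $$ (k,j)))^2" .
  qed
  also have "\<dots> = (\<Sum>j<n. \<bar>mu j\<bar> * (\<Sum>k<n. (cmod (V $$ (k,j)))^2))"
    by (subst sum.swap) (simp add: sum_distrib_left)
  also have "\<dots> = (\<Sum>j<n. \<bar>mu j\<bar>)"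
    by (intro sum.cong refl) (simp add: unitary_col_norm[OF UV])
  finally show ?thesis .
qed

text \<open>Triangle inequality: diagonalise \<open>A + B = W diag(l) W\<^sup>\<dagger>\<close>, write
  \<open>\<Sum>|l\<^sub>k| = \<Sum> sgn(l\<^sub>k) l\<^sub>k\<close> and split \<open>l\<^sub>k\<close> into the diagonal entries of \<open>W\<^sup>\<dagger>AW\<close> and \<open>W\<^sup>\<dagger>BW\<close>.\<close>

lemma trace_norm_triangle:
  assumes A: "herm n A" and B: "herm n B"
  shows "trace_norm (A + B) \<le> trace_norm A + trace_norm B"
proof -
  obtain W l where UW: "unitary n W" and AB: "A + B = W * diagm n l * adj W"
    using spectral_theorem[OF herm_add[OF A B]] by blast
  obtain Y mu where UY: "unitary n Y" and Ad: "A = Y * diagm n mu * adj Y"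
    using spectral_theorem[OF A] by blast
  obtain Z nu where UZ: "unitary n Z" and Bd: "B = Z * diagm n nu * adj Z"
    using spectral_theorem[OF B] by blast
  have Wc: "W \<in> carrier_mat n n" using UW by (simp add: unitary_def)
  have Ac: "A \<in> carrier_mat n n" and Bc: "B \<in> carrier_mat n n" using A B by (auto simp: herm_def)
  define s where "s k = sgn (l k)" for k
  have s1: "\<forall>k<n. \<bar>s k\<bar> \<le> 1" by (auto simp: s_def sgn_if)
  have lk: "l k = Re ((adj W * A * W) $$ (k,k)) + Re ((adj W * B * W) $$ (k,k))" if k: "k < n" for k
  proof -
    have "adj W * (A + B) * W = adj W * A * W + adj W * B * W"
      using Wc Ac Bc by (simp add: mult_add_distrib_mat[of _ n n] add_mult_distrib_mat[of _ n n])
    hence "(adj W * (A + B) * W) $$ (k,k) = (adj W * A * W) $$ (k,k) + (adj W * B * W) $$ (k,k)"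
      using Wc Ac k by simp
    moreover have "(adj W * (A + B) * W) $$ (k,k) = complex_of_real (l k)"
      unfolding AB unitary_unconj_diag[OF UW] using k by simp
    ultimately show ?thesis by (metis Re_complex_of_real plus_complex.sel(1))
  qed
  have "trace_norm (A + B) = (\<Sum>k<n. s k * l k)"
    unfolding trace_norm_conj_diag[OF UW AB] by (intro sum.cong refl) (simp add: s_def abs_sgn)
  also have "\<dots> = (\<Sum>k<n. s k * Re ((adj W * A * W) $$ (k,k))) + (\<Sum>k<n. s k * Re ((adj W * B * W) $$ (k,k)))"
    by (simp add: lk distrib_left sum.distrib)
  also have "\<dots> \<le> (\<Sum>j<n. \<bar>mu j\<bar>) + (\<Sum>j<n. \<bar>nu j\<bar>)"
    using signed_diagonal_bound[OF UW UY s1, of mu] signed_diagonal_bound[OF UW UZ s1, of nu] Ad Bd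
    by (intro add_mono) auto
  also have "\<dots> = trace_norm A + trace_norm B"
    using trace_norm_conj_diag[OF UY Ad] trace_norm_conj_diag[OF UZ Bd] by simp
  finally show ?thesis .
qed

lemma trace_norm_smult:
  assumes A: "herm n A"
  shows "trace_norm (complex_of_real c \<cdot>\<^sub>m A) = \<bar>c\<bar> * trace_norm A"
proof -
  obtain W l where UW: "unitary n W" and Ad: "A = W * diagm n l * adj W"
    using spectral_theorem[OF A] by blast
  have Wc: "W \<in> carrier_mat n n" using UW by (simp add: unitary_def)
  have "complex_of_real c \<cdot>\<^sub>m A = W * diagm n (\<lambda>k. c * l k) * adj W"
    using Wc unfolding Ad by (intro eq_matI) (auto simp: conj_diag_entry sum_distrib_left mult_ac)
  hence "trace_norm (complex_of_real c \<cdot>\<^sub>m A) = (\<Sum>k<n. \<bar>c * l k\<bar>)" by (rule trace_norm_conj_diag[OF UW])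
  also have "\<dots> = \<bar>c\<bar> * (\<Sum>k<n. \<bar>l k\<bar>)" by (simp add: abs_mult sum_distrib_left)
  finally show ?thesis using trace_norm_conj_diag[OF UW Ad] by simp
qed

lemma trace_norm_telescope:
  fixes k :: nat
  assumes H: "\<forall>i\<le>k. herm n (H i)"
  shows "trace_norm (H k - H 0) \<le> (\<Sum>i\<in>{1..k}. trace_norm (H i - H (i - 1)))"
  using H
proof (induction k)
  case 0
  have "H 0 - H 0 = complex_of_real 0 \<cdot>\<^sub>m H 0"
    using "0.prems" by (intro eq_matI) (auto simp: herm_def)
  thus ?case using trace_norm_smult[of n "H 0" 0] "0.prems" by simp
next
  case (Suc k)
  have Hc: "H i \<in> carrier_mat n n" if "i \<le> Suc k" for i using Suc.prems that by (simp add: herm_def)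
  have "H (Suc k) - H 0 = (H (Suc k) - H k) + (H k - H 0)"
    using Hc[of "Suc k"] Hc[of k] Hc[of 0] by (intro eq_matI) auto
  hence "trace_norm (H (Suc k) - H 0) \<le> trace_norm (H (Suc k) - H k) + trace_norm (H k - H 0)"
    using trace_norm_triangle[of n] Suc.prems herm_minus by simp
  also have "\<dots> \<le> trace_norm (H (Suc k) - H k) + (\<Sum>i\<in>{1..k}. trace_norm (H i - H (i - 1)))"
    using Suc.IH Suc.prems by simp
  also have "\<dots> = (\<Sum>i\<in>{1..Suc k}. trace_norm (H i - H (i - 1)))" by simp
  finally show ?case .
qed

subsection \<open>Bit strings as basis indices\<close>

lemma bitstrings_finite[simp]: "finite (bitstrings k)"
  unfolding bitstrings_def using finite_lists_length_eq[of "UNIV :: bool set" k] by simp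

lemma card_bitstrings: "card (bitstrings k) = 2 ^ k"
  unfolding bitstrings_def using card_lists_length_eq[of "UNIV :: bool set" k] by (simp add: card_UNIV_bool)

lemma bits_to_nat_less: "bits_to_nat z < 2 ^ length z"
  by (induction z) auto

lemma bits_to_nat_inj: "length x = length y \<Longrightarrow> bits_to_nat x = bits_to_nat y \<Longrightarrow> x = y"
proof (induction x arbitrary: y)
  case (Cons a x y)
  then obtain b y' where y: "y = b # y'" and len: "length x = length y'" by (cases y) auto
  have eq: "(if a then 2 ^ length x else 0) + bits_to_nat x = (if b then 2 ^ length x else 0) + bits_to_nat y'"
    using Cons.prems y len by simp
  have "a = b"
    using eq bits_to_nat_less[of x] bits_to_nat_less[of y'] len by (cases a; cases b) auto
  with eq Cons.IH[OF len] y show ?case by simp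
qed simp

lemma bits_to_nat_bij: "bij_betw bits_to_nat (bitstrings k) {..<2^k}"
proof -
  have inj: "inj_on bits_to_nat (bitstrings k)"
    by (auto intro!: inj_onI bits_to_nat_inj simp: bitstrings_def)
  moreover have "bits_to_nat ` bitstrings k \<subseteq> {..<2^k}"
    using bits_to_nat_less by (auto simp: bitstrings_def)
  moreover have "card (bits_to_nat ` bitstrings k) = card {..<(2::nat)^k}"
    using card_image[OF inj] by (simp add: card_bitstrings)
  ultimately show ?thesis by (simp add: bij_betw_def card_subset_eq)
qed

lemma nat_to_bits_bits_to_nat: "z \<in> bitstrings k \<Longrightarrow> nat_to_bits k (bits_to_nat z) = z"
  unfolding nat_to_bits_def
  by (rule the_equality) (auto simp: bitstrings_def intro: bits_to_nat_inj)

lemma nat_to_bits_in_bitstrings: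
  assumes "j < 2^k"
  shows "nat_to_bits k j \<in> bitstrings k"
proof -
  obtain z where "z \<in> bitstrings k" "j = bits_to_nat z"
    using assms bits_to_nat_bij[of k] by (auto simp: bij_betw_def)
  thus ?thesis using nat_to_bits_bits_to_nat by simp
qed

lemma sum_nat_to_bits: "(\<Sum>j<2^k. f (nat_to_bits k j)) = (\<Sum>x\<in>bitstrings k. f x)"
proof -
  have "(\<Sum>x\<in>bitstrings k. f (nat_to_bits k (bits_to_nat x))) = (\<Sum>j<2^k. f (nat_to_bits k j))"
    by (rule sum.reindex_bij_betw[OF bits_to_nat_bij])
  thus ?thesis by (simp add: nat_to_bits_bits_to_nat cong: sum.cong)
qed

text \<open>Summing a function of the first \<open>j\<close> bits over \<open>{0,1}\<^sup>m\<close> counts every prefix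
  \<open>2\<^sup>m\<^sup>-\<^sup>j\<close> times: \<open>{0,1}\<^sup>m \<cong> {0,1}\<^sup>j \<times> {0,1}\<^sup>m\<^sup>-\<^sup>j\<close> via concatenation.\<close>

lemma sum_over_prefixes:
  fixes g :: "bool list \<Rightarrow> real"
  assumes j: "j \<le> m"
  shows "(\<Sum>z\<in>bitstrings m. g (take j z)) = 2^(m-j) * (\<Sum>y\<in>bitstrings j. g y)"
proof -
  have bij: "bij_betw (\<lambda>(y,u). y @ u) (bitstrings j \<times> bitstrings (m-j)) (bitstrings m)"
  proof (rule bij_betw_imageI)
    show "inj_on (\<lambda>(y,u). y @ u) (bitstrings j \<times> bitstrings (m-j))"
    proof (rule inj_onI)
      fix p q assume "p \<in> bitstrings j \<times> bitstrings (m-j)" "q \<in> bitstrings j \<times> bitstrings (m-j)"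
        and "(\<lambda>(y,u). y @ u) p = (\<lambda>(y,u). y @ u) q"
      thus "p = q" by (cases p, cases q) (simp add: bitstrings_def)
    qed
    show "(\<lambda>(y,u). y @ u) ` (bitstrings j \<times> bitstrings (m-j)) = bitstrings m"
    proof
      show "bitstrings m \<subseteq> (\<lambda>(y,u). y @ u) ` (bitstrings j \<times> bitstrings (m-j))"
      proof
        fix z assume z: "z \<in> bitstrings m"
        hence "(take j z, drop j z) \<in> bitstrings j \<times> bitstrings (m-j)" using j by (auto simp: bitstrings_def)
        thus "z \<in> (\<lambda>(y,u). y @ u) ` (bitstrings j \<times> bitstrings (m-j))"
          by (metis (no_types, lifting) append_take_drop_id case_prod_conv image_eqI)
      qed
    qed (use j in \<open>auto simp: bitstrings_def\<close>)
  qed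
  have "(\<Sum>z\<in>bitstrings m. g (take j z)) = (\<Sum>p\<in>bitstrings j \<times> bitstrings (m-j). g (take j ((\<lambda>(y,u). y @ u) p)))"
    by (rule sum.reindex_bij_betw[OF bij, symmetric])
  also have "\<dots> = (\<Sum>p\<in>bitstrings j \<times> bitstrings (m-j). g (fst p))"
    by (intro sum.cong refl) (auto simp: bitstrings_def)
  also have "\<dots> = (\<Sum>y\<in>bitstrings j. \<Sum>u\<in>bitstrings (m-j). g y)"
    unfolding sum.cartesian_product by (simp add: case_prod_beta')
  also have "\<dots> = (\<Sum>y\<in>bitstrings j. 2^(m-j) * g y)" by (simp add: card_bitstrings)
  finally show ?thesis by (simp add: sum_distrib_left)
qed

subsection \<open>Block-diagonal matrices and classical-quantum operators\<close>

definition block_diag :: "nat \<Rightarrow> nat \<Rightarrow> (nat \<Rightarrow> complex mat) \<Rightarrow> complex mat" where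
  "block_diag N d G = mat (N * d) (N * d)
     (\<lambda>(r,c). if r div d = c div d then G (r div d) $$ (r mod d, c mod d) else 0)"

lemma block_diag_carrier[simp]: "block_diag N d G \<in> carrier_mat (N*d) (N*d)"
  "dim_row (block_diag N d G) = N * d" "dim_col (block_diag N d G) = N * d"
  by (simp_all add: block_diag_def)

lemma block_diag_index: "r < N * d \<Longrightarrow> c < N * d \<Longrightarrow>
   block_diag N d G $$ (r,c) = (if r div d = c div d then G (r div d) $$ (r mod d, c mod d) else 0)"
  by (simp add: block_diag_def)

lemma block_index_less: "(r::nat) < N * d \<Longrightarrow> r div d < N"
  by (metis less_mult_imp_div_less)

lemma sum_lessThan_add: "(\<Sum>t<(a::nat) + d. g t) = (\<Sum>t<a. g t) + (\<Sum>b<d. g (a + b))"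
  by (induction d) (auto simp: add.assoc)

lemma sum_blocks: "(\<Sum>t<(N::nat) * d. g t) = (\<Sum>j<N. \<Sum>a<d. g (j * d + a))"
proof (induction N)
  case (Suc N)
  have "(\<Sum>t<Suc N * d. g t) = (\<Sum>t<N * d + d. g t)" by (simp add: add.commute)
  also have "\<dots> = (\<Sum>t<N * d. g t) + (\<Sum>a<d. g (N * d + a))" by (rule sum_lessThan_add)
  finally show ?case using Suc.IH by simp
qed simp

lemma block_diag_mult:
  assumes d: "d > 0" and F: "\<forall>j<N. F j \<in> carrier_mat d d" and G: "\<forall>j<N. G j \<in> carrier_mat d d"
  shows "block_diag N d F * block_diag N d G = block_diag N d (\<lambda>j. F j * G j)"
proof (rule eq_matI)
  fix r c assume "r < dim_row (block_diag N d (\<lambda>j. F j * G j))" "c < dim_col (block_diag N d (\<lambda>j. F j * G j))"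
  hence rc: "r < N * d" "c < N * d" by auto
  have jr: "r div d < N" using rc block_index_less by auto
  have "(block_diag N d F * block_diag N d G) $$ (r,c)
      = (\<Sum>t<N*d. block_diag N d F $$ (r,t) * block_diag N d G $$ (t,c))"
    using rc by (intro mat_mult_entry) auto
  also have "\<dots> = (\<Sum>j<N. \<Sum>a<d. block_diag N d F $$ (r,j*d+a) * block_diag N d G $$ (j*d+a,c))"
    by (rule sum_blocks)
  also have "\<dots> = (\<Sum>j<N. if j = r div d then (\<Sum>a<d. (if r div d = c div d
                     then F j $$ (r mod d, a) * G j $$ (a, c mod d) else 0)) else 0)"
  proof (intro sum.cong refl)
    fix j assume j: "j \<in> {..<N}"
    have "j * d + a < N * d" if "a < d" for a
    proof -
      have "j * d + a < Suc j * d" using that by simp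
      also have "\<dots> \<le> N * d" using j by (intro mult_right_mono) auto
      finally show ?thesis .
    qed
    thus "(\<Sum>a<d. block_diag N d F $$ (r,j*d+a) * block_diag N d G $$ (j*d+a,c)) =
      (if j = r div d then (\<Sum>a<d. (if r div d = c div d then F j $$ (r mod d, a) * G j $$ (a, c mod d) else 0)) else 0)"
      using rc d by (auto simp: block_diag_index intro!: sum.cong)
  qed
  also have "\<dots> = (\<Sum>a<d. (if r div d = c div d then F (r div d) $$ (r mod d, a) * G (r div d) $$ (a, c mod d) else 0))"
    using jr by (simp add: sum.delta)
  also have "\<dots> = block_diag N d (\<lambda>j. F j * G j) $$ (r,c)"
    using F G jr d rc by (auto simp: block_diag_index mat_mult_entry[of _ d d _ d])
  finally show "(block_diag N d F * block_diag N d G) $$ (r,c) = block_diag N d (\<lambda>j. F j * G j) $$ (r,c)" .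
qed auto

lemma block_diag_adj:
  "d > 0 \<Longrightarrow> \<forall>j<N. F j \<in> carrier_mat d d \<Longrightarrow> adj (block_diag N d F) = block_diag N d (\<lambda>j. adj (F j))"
  by (rule eq_matI) (auto simp: block_diag_index dest!: block_index_less)

lemma block_diag_one: "d > 0 \<Longrightarrow> block_diag N d (\<lambda>j. 1\<^sub>m d) = 1\<^sub>m (N * d)"
  by (rule eq_matI) (auto simp: block_diag_index, metis div_mult_mod_eq)

lemma block_diag_diagm:
  "d > 0 \<Longrightarrow> block_diag N d (\<lambda>j. diagm d (lf j)) = diagm (N * d) (\<lambda>r. lf (r div d) (r mod d))"
  by (rule eq_matI) (auto simp: block_diag_index, metis div_mult_mod_eq)

lemma block_diag_cong: "(\<And>j. j < N \<Longrightarrow> F j = G j) \<Longrightarrow> block_diag N d F = block_diag N d G"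
  unfolding block_diag_def by (intro eq_matI) (auto simp: block_index_less)

text \<open>Diagonalising every block diagonalises the block-diagonal matrix, so the trace norm
  of a block-diagonal Hermitian matrix is the sum of the trace norms of its blocks.\<close>

lemma block_diag_conj_diag:
  assumes d: "d > 0" and UW: "\<forall>j<N. unitary d (W j)"
  shows "unitary (N * d) (block_diag N d W)"
    and "block_diag N d (\<lambda>j. W j * diagm d (l j) * adj (W j))
         = block_diag N d W * diagm (N * d) (\<lambda>r. l (r div d) (r mod d)) * adj (block_diag N d W)"
proof -
  have Wc: "\<forall>j<N. W j \<in> carrier_mat d d" using UW by (simp add: unitary_def)
  have adjW: "adj (block_diag N d W) = block_diag N d (\<lambda>j. adj (W j))"
    using d Wc by (rule block_diag_adj)
  have "adj (block_diag N d W) * block_diag N d W = block_diag N d (\<lambda>j. adj (W j) * W j)"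
    unfolding adjW using Wc d by (intro block_diag_mult) auto
  also have "\<dots> = 1\<^sub>m (N * d)"
    using UW d by (simp add: unitary_def block_diag_one cong: block_diag_cong)
  finally show "unitary (N * d) (block_diag N d W)" by (simp add: unitary_def)
  have "block_diag N d W * diagm (N * d) (\<lambda>r. l (r div d) (r mod d)) * adj (block_diag N d W)
      = block_diag N d (\<lambda>j. W j * diagm d (l j)) * block_diag N d (\<lambda>j. adj (W j))"
    unfolding adjW block_diag_diagm[OF d, symmetric] using Wc d by (subst block_diag_mult) auto
  also have "\<dots> = block_diag N d (\<lambda>j. W j * diagm d (l j) * adj (W j))"
    using Wc d by (intro block_diag_mult) auto
  finally show "block_diag N d (\<lambda>j. W j * diagm d (l j) * adj (W j))
         = block_diag N d W * diagm (N * d) (\<lambda>r. l (r div d) (r mod d)) * adj (block_diag N d W)" ..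
qed

lemma trace_norm_block_diag:
  assumes d: "d > 0" and G: "\<forall>j<N. herm d (G j)"
  shows "trace_norm (block_diag N d G) = (\<Sum>j<N. trace_norm (G j))"
proof -
  have "\<forall>j\<in>{..<N}. \<exists>p. unitary d (fst p) \<and> G j = fst p * diagm d (snd p) * adj (fst p)"
    using G spectral_theorem by fastforce
  then obtain P where P: "\<forall>j\<in>{..<N}. unitary d (fst (P j)) \<and> G j = fst (P j) * diagm d (snd (P j)) * adj (fst (P j))"
    by (metis bchoice)
  define W where "W j = fst (P j)" for j
  define l where "l j = snd (P j)" for j
  have UW: "\<forall>j<N. unitary d (W j)" and Gd: "\<forall>j<N. G j = W j * diagm d (l j) * adj (W j)"
    using P by (auto simp: W_def l_def)
  have "block_diag N d G = block_diag N d (\<lambda>j. W j * diagm d (l j) * adj (W j))"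
    using Gd by (intro block_diag_cong) auto
  also have "\<dots> = block_diag N d W * diagm (N * d) (\<lambda>r. l (r div d) (r mod d)) * adj (block_diag N d W)"
    by (rule block_diag_conj_diag(2)[OF d UW])
  finally have "trace_norm (block_diag N d G) = (\<Sum>r<N*d. \<bar>l (r div d) (r mod d)\<bar>)"
    by (rule trace_norm_conj_diag[OF block_diag_conj_diag(1)[OF d UW]])
  also have "\<dots> = (\<Sum>j<N. \<Sum>a<d. \<bar>l j a\<bar>)" using d by (simp add: sum_blocks)
  also have "\<dots> = (\<Sum>j<N. trace_norm (G j))"
    using UW Gd trace_norm_conj_diag by (intro sum.cong refl) simp
  finally show ?thesis .
qed

lemma trace_norm_cq_op:
  assumes d: "d > 0" and F: "\<forall>x\<in>bitstrings k. herm d (F x)"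
  shows "trace_norm (cq_op k d F) = (\<Sum>x\<in>bitstrings k. trace_norm (F x))"
proof -
  have "cq_op k d F = block_diag (2^k) d (\<lambda>j. F (nat_to_bits k j))"
    by (simp add: cq_op_def block_diag_def)
  also have "trace_norm \<dots> = (\<Sum>j<2^k. trace_norm (F (nat_to_bits k j)))"
    using d F nat_to_bits_in_bitstrings by (intro trace_norm_block_diag) auto
  finally show ?thesis using sum_nat_to_bits[of "\<lambda>x. trace_norm (F x)" k] by simp
qed

lemma cq_op_diff:
  assumes d: "d > 0" and F: "\<forall>x. F x \<in> carrier_mat d d" and G: "\<forall>x. G x \<in> carrier_mat d d"
  shows "cq_op k d F - cq_op k d G = cq_op k d (\<lambda>x. F x - G x)"
proof (rule eq_matI)
  fix i j assume "i < dim_row (cq_op k d (\<lambda>x. F x - G x))" "j < dim_col (cq_op k d (\<lambda>x. F x - G x))"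
  hence ij: "i < 2^k * d" "j < 2^k * d" by (auto simp: cq_op_def)
  define x where "x = nat_to_bits k (j div d)"
  have "dim_row (G x) = d" "dim_col (G x) = d" "i mod d < d" "j mod d < d" using d G by auto
  thus "(cq_op k d F - cq_op k d G) $$ (i,j) = cq_op k d (\<lambda>x. F x - G x) $$ (i,j)"
    using ij by (simp add: cq_op_def x_def)
qed (auto simp: cq_op_def)

lemma wsum_carrier[simp]: "wsum d S w M \<in> carrier_mat d d"
  "dim_row (wsum d S w M) = d" "dim_col (wsum d S w M) = d"
  by (simp_all add: wsum_def)

lemma wsum_cong: "(\<And>z. z \<in> S \<Longrightarrow> w z = w' z) \<Longrightarrow> wsum d S w M = wsum d S w' M"
  unfolding wsum_def by (intro eq_matI) (auto intro!: sum.cong)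

lemma wsum_herm:
  assumes "\<forall>z\<in>S. herm d (M z)"
  shows "herm d (wsum d S w M)"
proof -
  have "cnj (M z $$ (j,i)) = M z $$ (i,j)" if "z \<in> S" "i < d" "j < d" for z i j
    using herm_index assms that by blast
  thus ?thesis by (auto simp: herm_def wsum_def intro!: eq_matI sum.cong)
qed

lemma wsum_diff: "wsum d S w M - wsum d S w' M = wsum d S (\<lambda>z. w z - w' z) M"
  unfolding wsum_def by (intro eq_matI) (auto simp: sum_subtractf left_diff_distrib)

lemma wsum_smult: "complex_of_real c \<cdot>\<^sub>m wsum d S w M = wsum d S (\<lambda>z. c * w z) M"
  unfolding wsum_def by (intro eq_matI) (auto simp: sum_distrib_left mult_ac)

lemma wsum_restrict:
  assumes "T \<subseteq> S" "finite S"
  shows "wsum d T w M = wsum d S (\<lambda>z. if z \<in> T then w z else 0) M"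
proof -
  have "(\<Sum>z\<in>S. complex_of_real (if z \<in> T then w z else 0) * M z $$ ij)
      = (\<Sum>z\<in>T. complex_of_real (w z) * M z $$ ij)" for ij
  proof -
    have "(\<Sum>z\<in>S. complex_of_real (if z \<in> T then w z else 0) * M z $$ ij)
        = (\<Sum>z\<in>S. if z \<in> T then complex_of_real (w z) * M z $$ ij else 0)"
      by (intro sum.cong refl) auto
    also have "\<dots> = (\<Sum>z\<in>T. complex_of_real (w z) * M z $$ ij)"
      using assms by (simp add: sum.inter_restrict[symmetric] Int_absorb1)
    finally show ?thesis .
  qed
  thus ?thesis unfolding wsum_def by (intro eq_matI) auto
qed

subsection \<open>The hybrid argument\<close>

text \<open>The \<open>i\<close>-th hybrid of \<open>\<rho>\<^sub>Z\<^sub>B\<close> keeps the first \<open>i\<close> bits of \<open>Z\<close> and replaces the remaining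
  \<open>m - i\<close> bits by uniform ones: its block at \<open>z\<close> is \<open>2\<^sup>-\<^sup>(\<^sup>m\<^sup>-\<^sup>i\<^sup>) \<Sum>\<^sub>z\<^sub>' p\<^sub>z\<^sub>' \<rho>\<^sub>z\<^sub>'\<close> over the
  \<open>z'\<close> sharing the prefix \<open>z\<^sub>[\<^sub>i\<^sub>]\<close>.  So hybrid \<open>m\<close> is \<open>\<rho>\<^sub>Z\<^sub>B\<close> and hybrid \<open>0\<close> is \<open>\<rho>\<^sub>U\<^sub>m \<otimes> \<rho>\<^sub>B\<close>.\<close>

definition prefix_weight :: "nat \<Rightarrow> (bool list \<Rightarrow> real) \<Rightarrow> nat \<Rightarrow> bool list \<Rightarrow> bool list \<Rightarrow> real" where
  "prefix_weight m p i z z' = (if take i z' = take i z then p z' / 2 ^ (m - i) else 0)"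

definition hybrid ::
  "nat \<Rightarrow> nat \<Rightarrow> (bool list \<Rightarrow> real) \<Rightarrow> (bool list \<Rightarrow> complex mat) \<Rightarrow> nat \<Rightarrow> bool list \<Rightarrow> complex mat" where
  "hybrid m d p \<rho> i z = wsum d (bitstrings m) (prefix_weight m p i z) \<rho>"

text \<open>The operator whose trace norm the theorem bounds from below, at prefix \<open>y = z\<^sub>[\<^sub>i\<^sub>-\<^sub>1\<^sub>]\<close>:
  the (unnormalised) difference between the states conditioned on \<open>z\<^sub>i = 0\<close> and \<open>z\<^sub>i = 1\<close>.\<close>

definition bit_gap ::
  "nat \<Rightarrow> nat \<Rightarrow> (bool list \<Rightarrow> real) \<Rightarrow> (bool list \<Rightarrow> complex mat) \<Rightarrow> nat \<Rightarrow> bool list \<Rightarrow> complex mat" where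
  "bit_gap m d p \<rho> i y =
     wsum d {z \<in> bitstrings m. take (i - 1) z = y \<and> \<not> z ! (i - 1)} p \<rho>
   - wsum d {z \<in> bitstrings m. take (i - 1) z = y \<and> z ! (i - 1)} p \<rho>"

lemma hybrid_last:
  assumes "z \<in> bitstrings m"
  shows "hybrid m d p \<rho> m z = wsum d {z} p \<rho>"
proof -
  have "hybrid m d p \<rho> m z = wsum d (bitstrings m) (\<lambda>z'. if z' \<in> {z} then p z' else 0) \<rho>"
    unfolding hybrid_def using assms by (intro wsum_cong) (auto simp: prefix_weight_def bitstrings_def)
  also have "\<dots> = wsum d {z} p \<rho>" using assms by (intro wsum_restrict[symmetric]) auto
  finally show ?thesis .
qed

lemma hybrid_first: "hybrid m d p \<rho> 0 z = wsum d (bitstrings m) (\<lambda>z. p z / 2 ^ m) \<rho>"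
  unfolding hybrid_def by (intro wsum_cong) (simp add: prefix_weight_def)

lemma prefix_weight_step:
  assumes i: "1 \<le> i" "i \<le> m" and lz: "length z = m" and lz': "length z' = m"
  shows "prefix_weight m p i z z' - prefix_weight m p (i - 1) z z'
       = (if z ! (i - 1) then -1 else 1) / 2 ^ (m - (i - 1))
         * ((if take (i - 1) z' = take (i - 1) z \<and> \<not> z' ! (i - 1) then p z' else 0)
          - (if take (i - 1) z' = take (i - 1) z \<and> z' ! (i - 1) then p z' else 0))"
proof -
  have take_i: "take i x = take (i - 1) x @ [x ! (i - 1)]" if "length x = m" for x
    using i that take_Suc_conv_app_nth[of "i - 1" x] by simp
  have "(2::real) ^ (m - (i - 1)) = 2 * 2 ^ (m - i)"
    using i by (simp flip: power_Suc add: Suc_diff_le[symmetric])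
  thus ?thesis unfolding prefix_weight_def take_i[OF lz] take_i[OF lz']
    by (cases "z ! (i - 1)"; cases "z' ! (i - 1)"; cases "take (i - 1) z' = take (i - 1) z") (auto simp: field_simps)
qed

lemma trace_norm_hybrid_step:
  assumes \<rho>: "\<forall>z\<in>bitstrings m. herm d (\<rho> z)" and i: "1 \<le> i" "i \<le> m" and z: "z \<in> bitstrings m"
  shows "trace_norm (hybrid m d p \<rho> i z - hybrid m d p \<rho> (i - 1) z)
       = trace_norm (bit_gap m d p \<rho> i (take (i - 1) z)) / 2 ^ (m - (i - 1))"
proof -
  define c :: real where "c = (if z ! (i - 1) then -1 else 1) / 2 ^ (m - (i - 1))"
  have gap: "bit_gap m d p \<rho> i (take (i - 1) z) = wsum d (bitstrings m) (\<lambda>z'.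
          (if take (i - 1) z' = take (i - 1) z \<and> \<not> z' ! (i - 1) then p z' else 0)
        - (if take (i - 1) z' = take (i - 1) z \<and> z' ! (i - 1) then p z' else 0)) \<rho>"
    unfolding bit_gap_def wsum_diff[symmetric]
    by (subst (1 2) wsum_restrict[of _ "bitstrings m"]) (auto intro!: wsum_cong arg_cong2[where f = minus])
  have step: "hybrid m d p \<rho> i z - hybrid m d p \<rho> (i - 1) z = wsum d (bitstrings m) (\<lambda>z'. c *
         ((if take (i - 1) z' = take (i - 1) z \<and> \<not> z' ! (i - 1) then p z' else 0)
        - (if take (i - 1) z' = take (i - 1) z \<and> z' ! (i - 1) then p z' else 0))) \<rho>"
    unfolding hybrid_def wsum_diff c_def
    using prefix_weight_step[OF i] z by (intro wsum_cong) (simp add: bitstrings_def)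
  have "herm d (bit_gap m d p \<rho> i (take (i - 1) z))"
    unfolding bit_gap_def using \<rho> by (intro herm_minus wsum_herm) auto
  hence "trace_norm (hybrid m d p \<rho> i z - hybrid m d p \<rho> (i - 1) z)
       = \<bar>c\<bar> * trace_norm (bit_gap m d p \<rho> i (take (i - 1) z))"
    unfolding step gap wsum_smult[symmetric] by (rule trace_norm_smult)
  moreover have "\<bar>c\<bar> = 1 / 2 ^ (m - (i - 1))" by (simp add: c_def)
  ultimately show ?thesis by simp
qed

lemma trace_norm_far_as_hybrids:
  assumes \<rho>: "\<forall>z\<in>bitstrings m. herm d (\<rho> z)" and d: "d > 0"
  shows "trace_norm (cq_op m d (\<lambda>z. wsum d {z} p \<rho>)
           - cq_op m d (\<lambda>_. wsum d (bitstrings m) (\<lambda>z. p z / 2 ^ m) \<rho>))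
       = (\<Sum>z\<in>bitstrings m. trace_norm (hybrid m d p \<rho> m z - hybrid m d p \<rho> 0 z))"
proof -
  have herm_w: "herm d (wsum d S w \<rho>)" if "S \<subseteq> bitstrings m" for S w
    using \<rho> that by (intro wsum_herm) auto
  have "trace_norm (cq_op m d (\<lambda>z. wsum d {z} p \<rho>)
           - cq_op m d (\<lambda>_. wsum d (bitstrings m) (\<lambda>z. p z / 2 ^ m) \<rho>))
      = (\<Sum>z\<in>bitstrings m. trace_norm (wsum d {z} p \<rho> - wsum d (bitstrings m) (\<lambda>z. p z / 2 ^ m) \<rho>))"
    using d by (subst cq_op_diff) (auto intro!: trace_norm_cq_op herm_minus herm_w)
  also have "\<dots> = (\<Sum>z\<in>bitstrings m. trace_norm (hybrid m d p \<rho> m z - hybrid m d p \<rho> 0 z))"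
    by (intro sum.cong refl) (simp add: hybrid_last hybrid_first)
  finally show ?thesis .
qed

text \<open>Telescoping through the hybrids, and regrouping the \<open>z\<close> by their prefix \<open>z\<^sub>[\<^sub>i\<^sub>-\<^sub>1\<^sub>]\<close>
  (each prefix occurs \<open>2\<^sup>m\<^sup>-\<^sup>i\<^sup>+\<^sup>1\<close> times), bounds the distance by the sum over \<open>i\<close> of the
  quantities in the theorem.\<close>

lemma hybrid_distance_bound:
  assumes \<rho>: "\<forall>z\<in>bitstrings m. herm d (\<rho> z)" and d: "d > 0"
  shows "(\<Sum>z\<in>bitstrings m. trace_norm (hybrid m d p \<rho> m z - hybrid m d p \<rho> 0 z))
       \<le> (\<Sum>i\<in>{1..m}. trace_norm (cq_op (i - 1) d (bit_gap m d p \<rho> i)))"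
proof -
  have herm_hybrid: "herm d (hybrid m d p \<rho> i z)" for i z
    unfolding hybrid_def using \<rho> by (intro wsum_herm) auto
  have herm_gap: "herm d (bit_gap m d p \<rho> i y)" for i y
    unfolding bit_gap_def using \<rho> by (intro herm_minus wsum_herm) auto
  have "(\<Sum>z\<in>bitstrings m. trace_norm (hybrid m d p \<rho> m z - hybrid m d p \<rho> 0 z))
      \<le> (\<Sum>z\<in>bitstrings m. \<Sum>i\<in>{1..m}. trace_norm (hybrid m d p \<rho> i z - hybrid m d p \<rho> (i - 1) z))"
    using herm_hybrid by (intro sum_mono trace_norm_telescope) auto
  also have "\<dots> = (\<Sum>i\<in>{1..m}. \<Sum>z\<in>bitstrings m. trace_norm (bit_gap m d p \<rho> i (take (i - 1) z)) / 2 ^ (m - (i - 1)))"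
    by (subst sum.swap) (intro sum.cong refl trace_norm_hybrid_step[OF \<rho>]; simp)
  also have "\<dots> = (\<Sum>i\<in>{1..m}. \<Sum>y\<in>bitstrings (i - 1). trace_norm (bit_gap m d p \<rho> i y))"
  proof (rule sum.cong[OF refl])
    fix i assume "i \<in> {1..m}"
    hence "(\<Sum>z\<in>bitstrings m. trace_norm (bit_gap m d p \<rho> i (take (i - 1) z)))
        = 2 ^ (m - (i - 1)) * (\<Sum>y\<in>bitstrings (i - 1). trace_norm (bit_gap m d p \<rho> i y))"
      by (intro sum_over_prefixes) auto
    thus "(\<Sum>z\<in>bitstrings m. trace_norm (bit_gap m d p \<rho> i (take (i - 1) z)) / 2 ^ (m - (i - 1)))
        = (\<Sum>y\<in>bitstrings (i - 1). trace_norm (bit_gap m d p \<rho> i y))"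
      by (simp add: sum_divide_distrib[symmetric])
  qed
  also have "\<dots> = (\<Sum>i\<in>{1..m}. trace_norm (cq_op (i - 1) d (bit_gap m d p \<rho> i)))"
    using d herm_gap by (simp add: trace_norm_cq_op)
  finally show ?thesis .
qed

lemma exists_above_average:
  fixes f :: "nat \<Rightarrow> real"
  assumes "m \<ge> 1" and "(\<Sum>i\<in>{1..m}. f i) > \<epsilon>"
  shows "\<exists>i\<in>{1..m}. f i > \<epsilon> / m"
proof (rule ccontr)
  assume "\<not> ?thesis"
  hence "(\<Sum>i\<in>{1..m}. f i) \<le> (\<Sum>i\<in>{1..m}. \<epsilon> / m)" by (intro sum_mono) (auto simp: not_less)
  also have "\<dots> = \<epsilon>" using assms(1) by simp
  finally show False using assms(2) by simp
qed

text \<open>A density operator is Hermitian, and it lives in positive dimension because its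
  trace is \<open>1\<close>.\<close>

lemma density_op_herm: "density_op d \<rho> \<Longrightarrow> herm d \<rho>"
  by (simp add: density_op_def psd_def herm_def)

lemma density_op_dim_pos: "density_op d \<rho> \<Longrightarrow> d > 0"
  by (cases "d = 0") (auto simp: density_op_def psd_def mtrace_def)

theorem mainTheorem12:
  fixes m d :: nat and p :: "bool list \<Rightarrow> real" and \<rho> :: "bool list \<Rightarrow> complex mat"
    and \<epsilon> :: real
  assumes m_pos: "m \<ge> 1"
    and p_nonneg: "\<forall>z \<in> bitstrings m. p z \<ge> 0"
    and p_sum: "(\<Sum>z \<in> bitstrings m. p z) = 1"
    and dens: "\<forall>z \<in> bitstrings m. density_op d (\<rho> z)"
    and far: "trace_norm
       (cq_op m d (\<lambda>z. wsum d {z} p \<rho>)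
        - cq_op m d (\<lambda>_. wsum d (bitstrings m) (\<lambda>z. p z / 2 ^ m) \<rho>)) > \<epsilon>"
  shows "\<exists>i \<in> {1..m}. trace_norm
       (cq_op (i - 1) d (\<lambda>y.
           wsum d {z \<in> bitstrings m. take (i - 1) z = y \<and> \<not> z ! (i - 1)} p \<rho>
         - wsum d {z \<in> bitstrings m. take (i - 1) z = y \<and> z ! (i - 1)} p \<rho>)) > \<epsilon> / m"
proof -
  have \<rho>: "\<forall>z\<in>bitstrings m. herm d (\<rho> z)" using dens density_op_herm by blast
  have "replicate m False \<in> bitstrings m" by (simp add: bitstrings_def)
  hence d: "d > 0" using dens density_op_dim_pos by blast
  have "(\<Sum>i\<in>{1..m}. trace_norm (cq_op (i - 1) d (bit_gap m d p \<rho> i))) > \<epsilon>"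
    using far hybrid_distance_bound[OF \<rho> d, where p = p] trace_norm_far_as_hybrids[OF \<rho> d, where p = p]
    by linarith
  from exists_above_average[OF m_pos this] show ?thesis unfolding bit_gap_def .
qed

end
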